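(* Let $\star$ be a state over time function satisfying axioms (E) and (P). Then for all channels $\mathcal{E}_{B|A}$, $\mathcal{F}_{C|B}$, $\mathcal{G}_{D|C}$ and every $\rho_A\in\mathfrak{S}(A)$, $$\mathrm{Tr}_{BC}\big[\mathcal{G}_{D|C}\star(\mathcal{F}_{C|B}\star(\mathcal{E}_{B|A}\star\rho_A))\big]=(\mathcal{G}\circ\mathcal{F}\circ\mathcal{E})_{D|A}\star\rho_A,$$ where each star applied to an operator on several systems acts on the indicated subsystem, with the other systems as spectators as in axiom (E).
   Context: Systems are finite-dimensional Hilbert spaces; $\mathfrak{B}(A)$ linear operators, $\mathfrak{S}(A)$ density operators, $\mathfrak{C}(A,B)$ quantum channels (CPTP maps $\mathfrak{B}(A)\to\mathfrak{B}(B)$). A state over time function assigns to all systems $A,B$ a map $\star:\mathfrak{C}(A,B)\times\mathfrak{S}(A)\to\mathfrak{B}(A\otimes B)$, $(\mathcal{E},\rho)\mapsto\mathcal{E}_{B|A}\star\rho_A$, with $\mathrm{Tr}_A[\mathcal{E}\star\rho]=\mathcal{E}(\rho)$ and $\mathrm{Tr}_B[\mathcal{E}\star\rho]=\rho$, extended homogeneously by $(\lambda\mathcal{E})\star\rho=\mathcal{E}\star(\lambda\rho)=\lambda(\mathcal{E}\star\rho)$, $\lambda\in\mathbb{C}$. A quantum state over spacetime on $A\otimes E$ is either a density operator on $A\otimes E$ or an operator of the form $\mathcal{F}\star\sigma$ (possibly iterated). Axiom (E): for all systems $A,B,E$, every quantum state over spacetime $\rho_{AE}$ and every channel $\mathcal{E}_{B|A}$,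 an operator $\mathcal{E}_{B|A}\star\rho_{AE}$ on $A\otimes B\otimes E$ is defined such that for every completely positive trace-non-increasing map $\mathcal{I}_E$ on $E$, $\mathcal{I}_E[\mathcal{E}\star\rho_{AE}]=\mathcal{E}\star\mathcal{I}_E(\rho_{AE})$, and $\mathrm{Tr}_A[\mathcal{E}\star\rho_{AE}]=(\mathcal{E}\otimes\mathrm{id}_E)(\rho_{AE})$. Axiom (P): for all channels $\mathcal{E}_{B|A}$, $\mathcal{F}_{C|B}$ and states $\rho_A$, $\mathrm{Tr}_B[\mathcal{F}_{C|B}\star(\mathcal{E}_{B|A}\star\rho_A)]=(\mathcal{F}\circ\mathcal{E})_{C|A}\star\rho_A$, with $\mathcal{F}_{C|B}\star(\cdot)$ acting on the $B$-part (spectator $A$). *)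

theory Defs
  imports "Jordan_Normal_Form.Matrix" "HOL-Combinatorics.Permutations"
begin

text \<open>A system is C^n, identified with its dimension n (n > 0). Composite systems are ordered tensor products with the standard
  mixed-radix (Kronecker) indexing: index (x, y) of X (x) Y (dimensions dX, dY) is x * dY + y.\<close>

definition mtrace :: "nat \<Rightarrow> complex mat \<Rightarrow> complex" where
  "mtrace n M = (\<Sum>i<n. M $$ (i, i))"

definition psd :: "nat \<Rightarrow> complex mat \<Rightarrow> bool" where
  "psd n M \<longleftrightarrow> M \<in> carrier_mat n n \<and>
     (\<forall>v :: nat \<Rightarrow> complex. (\<Sum>i<n. \<Sum>j<n. cnj (v i) * M $$ (i, j) * v j) \<in> \<real> \<and>
        Re (\<Sum>i<n. \<Sum>j<n. cnj (v i) * M $$ (i, j) * v j) \<ge> 0)"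

definition density :: "nat \<Rightarrow> complex mat \<Rightarrow> bool" where
  "density n \<rho> \<longleftrightarrow> psd n \<rho> \<and> mtrace n \<rho> = 1"

text \<open>partial trace over the middle factor of L (x) M (x) R\<close>
definition ptrace_mid :: "nat \<Rightarrow> nat \<Rightarrow> nat \<Rightarrow> complex mat \<Rightarrow> complex mat" where
  "ptrace_mid dL dM dR X = mat (dL * dR) (dL * dR) (\<lambda>(i, j).
     \<Sum>m<dM. X $$ ((i div dR) * (dM * dR) + m * dR + i mod dR,
                   (j div dR) * (dM * dR) + m * dR + j mod dR))"

text \<open>\<open>id_n \<otimes> f\<close> applied to an operator on C^n (x) A, where f maps operators on A to operators on B\<close>
definition lift_last :: "nat \<Rightarrow> nat \<Rightarrow> nat \<Rightarrow> (complex mat \<Rightarrow> complex mat) \<Rightarrow> complex mat \<Rightarrow> complex mat" where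
  "lift_last n dA dB f X = mat (n * dB) (n * dB) (\<lambda>(i, j).
     f (mat dA dA (\<lambda>(a, a'). X $$ ((i div dB) * dA + a, (j div dB) * dA + a')))
       $$ (i mod dB, j mod dB))"

text \<open>\<open>f \<otimes> id_R\<close> applied to an operator on A (x) R, where f maps operators on A to operators on B\<close>
definition lift_first :: "nat \<Rightarrow> nat \<Rightarrow> nat \<Rightarrow> (complex mat \<Rightarrow> complex mat) \<Rightarrow> complex mat \<Rightarrow> complex mat" where
  "lift_first dA dB dR f X = mat (dB * dR) (dB * dR) (\<lambda>(i, j).
     f (mat dA dA (\<lambda>(a, a'). X $$ (a * dR + i mod dR, a' * dR + j mod dR)))
       $$ (i div dR, j div dR))"

definition cp_map :: "nat \<Rightarrow> nat \<Rightarrow> (complex mat \<Rightarrow> complex mat) \<Rightarrow> bool" where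
  "cp_map dA dB f \<longleftrightarrow>
     (\<forall>X \<in> carrier_mat dA dA. f X \<in> carrier_mat dB dB) \<and>
     (\<forall>X \<in> carrier_mat dA dA. \<forall>Y \<in> carrier_mat dA dA. f (X + Y) = f X + f Y) \<and>
     (\<forall>X \<in> carrier_mat dA dA. \<forall>c. f (c \<cdot>\<^sub>m X) = c \<cdot>\<^sub>m f X) \<and>
     (\<forall>n X. psd (n * dA) X \<longrightarrow> psd (n * dB) (lift_last n dA dB f X))"

definition channel :: "nat \<Rightarrow> nat \<Rightarrow> (complex mat \<Rightarrow> complex mat) \<Rightarrow> bool" where
  "channel dA dB f \<longleftrightarrow> cp_map dA dB f \<and>
     (\<forall>X \<in> carrier_mat dA dA. mtrace dB (f X) = mtrace dA X)"

definition cptni :: "nat \<Rightarrow> nat \<Rightarrow> (complex mat \<Rightarrow> complex mat) \<Rightarrow> bool" where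
  "cptni dA dB f \<longleftrightarrow> cp_map dA dB f \<and>
     (\<forall>X. psd dA X \<longrightarrow> Re (mtrace dB (f X)) \<le> Re (mtrace dA X))"

text \<open>Mixed-radix encoding of multi-indices of a tensor product of factors with dimensions ds
  (first factor most significant).\<close>
fun encode :: "nat list \<Rightarrow> nat list \<Rightarrow> nat" where
  "encode (d # ds) (x # xs) = x * prod_list ds + encode ds xs"
| "encode _ _ = 0"

fun decode :: "nat list \<Rightarrow> nat \<Rightarrow> nat list" where
  "decode [] n = []"
| "decode (d # ds) n = (n div prod_list ds) # decode ds (n mod prod_list ds)"

text \<open>Reordering of tensor factors: new factor i is old factor p i.\<close>
definition permute_op :: "nat list \<Rightarrow> (nat \<Rightarrow> nat) \<Rightarrow> complex mat \<Rightarrow> complex mat" where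
  "permute_op ds p X = (let ds' = permute_list p ds; N = prod_list ds in
     mat N N (\<lambda>(i, j). X $$ (encode ds (permute_list (inv_into UNIV p) (decode ds' i)),
                              encode ds (permute_list (inv_into UNIV p) (decode ds' j)))))"

text \<open>Types of the two star maps.
  \<open>star dA dB \<E> \<rho>\<close>: \<open>\<E>_{B|A} \<star> \<rho>_A\<close>, an operator on A (x) B.
  \<open>starE dE dA dB \<E> \<rho>\<close>: \<open>\<E>_{B|A} \<star> \<rho>_{EA}\<close> with spectator E, \<rho> an operator on E (x) A,
  result an operator on E (x) A (x) B.\<close>
type_synonym star_fun = "nat \<Rightarrow> nat \<Rightarrow> (complex mat \<Rightarrow> complex mat) \<Rightarrow> complex mat \<Rightarrow> complex mat"
type_synonym starE_fun = "nat \<Rightarrow> nat \<Rightarrow> nat \<Rightarrow> (complex mat \<Rightarrow> complex mat) \<Rightarrow> complex mat \<Rightarrow> complex mat"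

text \<open>state over time function (with its homogeneous extension)\<close>
definition state_over_time :: "star_fun \<Rightarrow> bool" where
  "state_over_time star \<longleftrightarrow>
    (\<forall>dA dB \<E> \<rho>. 0 < dA \<and> 0 < dB \<and> channel dA dB \<E> \<and> density dA \<rho> \<longrightarrow>
       ptrace_mid 1 dA dB (star dA dB \<E> \<rho>) = \<E> \<rho> \<and>
       ptrace_mid dA dB 1 (star dA dB \<E> \<rho>) = \<rho> \<and>
       (\<forall>c. star dA dB (\<lambda>X. c \<cdot>\<^sub>m \<E> X) \<rho> = c \<cdot>\<^sub>m star dA dB \<E> \<rho> \<and>
            star dA dB \<E> (c \<cdot>\<^sub>m \<rho>) = c \<cdot>\<^sub>m star dA dB \<E> \<rho>))"

inductive qsos :: "star_fun \<Rightarrow> starE_fun \<Rightarrow> nat list \<Rightarrow> complex mat \<Rightarrow> bool"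
  for star starE where
  qsos_density: "\<lbrakk>\<forall>d \<in> set ds. 0 < d; density (prod_list ds) X\<rbrakk> \<Longrightarrow> qsos star starE ds X"
| qsos_star: "\<lbrakk>0 < dA; 0 < dB; density dA \<sigma>; channel dA dB F\<rbrakk>
     \<Longrightarrow> qsos star starE [dA, dB] (star dA dB F \<sigma>)"
| qsos_iter: "\<lbrakk>qsos star starE (ds1 @ ds2) X; 0 < dB; channel (prod_list ds2) dB F\<rbrakk>
     \<Longrightarrow> qsos star starE (ds1 @ ds2 @ [dB]) (starE (prod_list ds1) (prod_list ds2) dB F X)"
| qsos_perm: "\<lbrakk>qsos star starE ds X; p permutes {..<length ds}\<rbrakk>
     \<Longrightarrow> qsos star starE (permute_list p ds) (permute_op ds p X)"

definition qsos_on :: "star_fun \<Rightarrow> starE_fun \<Rightarrow> nat \<Rightarrow> nat \<Rightarrow> complex mat \<Rightarrow> bool" where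
  "qsos_on star starE dE dA X \<longleftrightarrow>
     (\<exists>ds1 ds2. prod_list ds1 = dE \<and> prod_list ds2 = dA \<and> qsos star starE (ds1 @ ds2) X)"

definition axiom_E :: "star_fun \<Rightarrow> starE_fun \<Rightarrow> bool" where
  "axiom_E star starE \<longleftrightarrow>
    (\<forall>dE dA dB \<rho> \<E>. 0 < dE \<and> 0 < dA \<and> 0 < dB \<and> qsos_on star starE dE dA \<rho> \<and> channel dA dB \<E> \<longrightarrow>
       (\<forall>dE' \<I>. 0 < dE' \<and> cptni dE dE' \<I> \<longrightarrow>
          lift_first dE dE' (dA * dB) \<I> (starE dE dA dB \<E> \<rho>) =
          starE dE' dA dB \<E> (lift_first dE dE' dA \<I> \<rho>)) \<and>
       ptrace_mid dE dA dB (starE dE dA dB \<E> \<rho>) = lift_last dE dA dB \<E> \<rho>)"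

definition axiom_P :: "star_fun \<Rightarrow> starE_fun \<Rightarrow> bool" where
  "axiom_P star starE \<longleftrightarrow>
    (\<forall>dA dB dC \<E> \<F> \<rho>. 0 < dA \<and> 0 < dB \<and> 0 < dC \<and> channel dA dB \<E> \<and> channel dB dC \<F> \<and>
        density dA \<rho> \<longrightarrow>
       ptrace_mid dA dB dC (starE dA dB dC \<F> (star dA dB \<E> \<rho>)) = star dA dC (\<F> \<circ> \<E>) \<rho>)"

end

theory Submission
  imports Defs
begin

text \<open>Let \<open>X = \<F> \<star> (\<E> \<star> \<rho>)\<close> on \<open>A \<otimes> B \<otimes> C\<close>. Tracing out \<open>B \<otimes> C\<close> from
  \<open>\<G> \<star> X\<close> is tracing out \<open>B\<close> first and then \<open>C\<close>. The partial trace over \<open>B\<close> is a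
  completely positive trace-non-increasing map on the spectator \<open>A \<otimes> B\<close> of \<open>\<G> \<star> X\<close>,
  so by axiom (E) it commutes with \<open>\<G> \<star> -\<close>; by (P) it turns \<open>X\<close> into
  \<open>(\<F> \<circ> \<E>) \<star> \<rho>\<close>, and a second application of (P) then yields \<open>(\<G> \<circ> \<F> \<circ> \<E>) \<star> \<rho>\<close>.\<close>

lemma mixed_radix_less:
  fixes i m a b :: nat
  assumes "i < a" "m < b"
  shows "i * b + m < a * b"
proof -
  have "i * b + m < Suc i * b" using assms(2) by simp
  also have "\<dots> \<le> a * b" using assms(1) by (intro mult_le_mono1) simp
  finally show ?thesis .
qed

lemma mixed_radix_div_mod:
  fixes q r n :: nat
  assumes "r < n"
  shows "(q * n + r) div n = q" and "(q * n + r) mod n = r"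
  using assms by simp_all

lemma sum_lessThan_mult:
  fixes f :: "nat \<Rightarrow> 'a::comm_monoid_add"
  shows "(\<Sum>k<a * b. f k) = (\<Sum>i<a. \<Sum>j<b. f (i * b + j))"
proof -
  have "(\<Sum>k<a * b. f k) = (\<Sum>i<a. sum f {i * b..<i * b + b})"
    using sum.nat_group[of f b a] by (simp add: mult.commute)
  also have "\<dots> = (\<Sum>i<a. \<Sum>j<b. f (i * b + j))"
  proof (rule sum.cong[OF refl])
    fix i
    have "{i * b..<i * b + b} = (\<lambda>j. i * b + j) ` {..<b}"
      by (simp add: lessThan_atLeast0 add.commute)
    then show "sum f {i * b..<i * b + b} = (\<Sum>j<b. f (i * b + j))"
      by (simp add: sum.reindex inj_on_def)
  qed
  finally show ?thesis .
qed

lemma sum_lessThan_mult_mod_eq: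
  fixes g :: "nat \<Rightarrow> 'a::comm_monoid_add"
  assumes "m < b"
  shows "(\<Sum>k<a * b. if k mod b = m then g k else 0) = (\<Sum>i<a. g (i * b + m))"
proof -
  have "(\<Sum>k<a * b. if k mod b = m then g k else 0)
      = (\<Sum>i<a. \<Sum>j<b. if j = m then g (i * b + j) else 0)"
    unfolding sum_lessThan_mult by (intro sum.cong refl) auto
  then show ?thesis using assms by simp
qed

definition quad_form :: "nat \<Rightarrow> complex mat \<Rightarrow> (nat \<Rightarrow> complex) \<Rightarrow> complex" where
  "quad_form n M v = (\<Sum>i<n. \<Sum>j<n. cnj (v i) * M $$ (i, j) * v j)"

lemma psd_iff_quad_form:
  "psd n M \<longleftrightarrow> M \<in> carrier_mat n n \<and> (\<forall>v. quad_form n M v \<in> \<real> \<and> 0 \<le> Re (quad_form n M v))"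
  unfolding psd_def quad_form_def by simp

lemma quad_form_residue_block:
  fixes w :: "nat \<Rightarrow> complex"
  assumes "m < b"
  shows "quad_form (N * b) X (\<lambda>k. if k mod b = m then w (k div b) else 0)
       = (\<Sum>i<N. \<Sum>j<N. cnj (w i) * X $$ (i * b + m, j * b + m) * w j)"
proof -
  let ?v = "\<lambda>k. if k mod b = m then w (k div b) else 0"
  have inner: "(\<Sum>l<N * b. X $$ (p, l) * ?v l) = (\<Sum>j<N. X $$ (p, j * b + m) * w j)" for p
  proof -
    have "(\<Sum>l<N * b. X $$ (p, l) * ?v l)
        = (\<Sum>l<N * b. if l mod b = m then X $$ (p, l) * w (l div b) else 0)"
      by (intro sum.cong refl) auto
    then show ?thesis using assms by (simp add: sum_lessThan_mult_mod_eq)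
  qed
  have "quad_form (N * b) X ?v = (\<Sum>k<N * b. cnj (?v k) * (\<Sum>l<N * b. X $$ (k, l) * ?v l))"
    unfolding quad_form_def by (simp add: sum_distrib_left mult.assoc)
  also have "\<dots> = (\<Sum>k<N * b. if k mod b = m
                      then cnj (w (k div b)) * (\<Sum>j<N. X $$ (k, j * b + m) * w j) else 0)"
    unfolding inner by (intro sum.cong refl) auto
  also have "\<dots> = (\<Sum>i<N. \<Sum>j<N. cnj (w i) * X $$ (i * b + m, j * b + m) * w j)"
    using assms by (simp add: sum_lessThan_mult_mod_eq sum_distrib_left mult.assoc)
  finally show ?thesis .
qed

definition ptrace_right :: "nat \<Rightarrow> nat \<Rightarrow> complex mat \<Rightarrow> complex mat" where
  "ptrace_right dA dB Y = mat dA dA (\<lambda>(i, j). \<Sum>m<dB. Y $$ (i * dB + m, j * dB + m))"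

lemma lift_last_ptrace_right:
  "lift_last n (dA * dB) dA (ptrace_right dA dB) X = ptrace_right (n * dA) dB X"
proof (rule eq_matI)
  fix i j
  assume "i < dim_row (ptrace_right (n * dA) dB X)" "j < dim_col (ptrace_right (n * dA) dB X)"
  then have ij: "i < n * dA" "j < n * dA" by (auto simp: ptrace_right_def)
  then have "0 < dA" by (cases dA) auto
  have regroup: "(k div dA) * (dA * dB) + (k mod dA * dB + m) = k * dB + m" for k m
    using div_mult_mod_eq[of k dA] by (metis add.assoc add_mult_distrib mult.assoc)
  have "lift_last n (dA * dB) dA (ptrace_right dA dB) X $$ (i, j) =
     (\<Sum>m<dB. X $$ ((i div dA) * (dA * dB) + (i mod dA * dB + m),
                   (j div dA) * (dA * dB) + (j mod dA * dB + m)))"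
    using ij \<open>0 < dA\<close> by (simp add: lift_last_def ptrace_right_def mixed_radix_less)
  also have "\<dots> = ptrace_right (n * dA) dB X $$ (i, j)"
    using ij by (simp only: regroup) (simp add: ptrace_right_def)
  finally show "lift_last n (dA * dB) dA (ptrace_right dA dB) X $$ (i, j)
      = ptrace_right (n * dA) dB X $$ (i, j)" .
qed (auto simp: lift_last_def ptrace_right_def)

lemma psd_ptrace_right:
  assumes "psd (N * dB) X"
  shows "psd N (ptrace_right N dB X)"
proof -
  let ?slice = "\<lambda>w m k. if k mod dB = m then w (k div dB) else 0"
  have sum_slices: "quad_form N (ptrace_right N dB X) w = (\<Sum>m<dB. quad_form (N * dB) X (?slice w m))"
    for w
  proof -
    have "quad_form N (ptrace_right N dB X) w
        = (\<Sum>m<dB. \<Sum>i<N. \<Sum>j<N. cnj (w i) * X $$ (i * dB + m, j * dB + m) * w j)"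
      unfolding quad_form_def
      by (simp add: ptrace_right_def sum_distrib_left sum_distrib_right sum.swap[where A = "{..<dB}"])
    then show ?thesis by (simp add: quad_form_residue_block)
  qed
  show ?thesis
    unfolding psd_iff_quad_form
  proof (intro conjI allI)
    show "ptrace_right N dB X \<in> carrier_mat N N" by (simp add: ptrace_right_def)
  next
    fix w
    show "quad_form N (ptrace_right N dB X) w \<in> \<real>"
      unfolding sum_slices using assms by (auto simp: psd_iff_quad_form)
    show "0 \<le> Re (quad_form N (ptrace_right N dB X) w)"
      unfolding sum_slices Re_sum using assms by (auto simp: psd_iff_quad_form intro: sum_nonneg)
  qed
qed

lemma cptni_ptrace_right: "cptni (dA * dB) dA (ptrace_right dA dB)"
  unfolding cptni_def cp_map_def
proof (intro conjI ballI allI impI)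
  fix X Y :: "complex mat" and c
  assume X: "X \<in> carrier_mat (dA * dB) (dA * dB)" and Y: "Y \<in> carrier_mat (dA * dB) (dA * dB)"
  show "ptrace_right dA dB (X + Y) = ptrace_right dA dB X + ptrace_right dA dB Y"
    by (rule eq_matI) (use X Y in \<open>auto simp: ptrace_right_def mixed_radix_less sum.distrib\<close>)
  show "ptrace_right dA dB (c \<cdot>\<^sub>m X) = c \<cdot>\<^sub>m ptrace_right dA dB X"
    by (rule eq_matI) (use X in \<open>auto simp: ptrace_right_def mixed_radix_less sum_distrib_left\<close>)
next
  fix n and X :: "complex mat"
  assume "psd (n * (dA * dB)) X"
  then show "psd (n * dA) (lift_last n (dA * dB) dA (ptrace_right dA dB) X)"
    by (simp add: lift_last_ptrace_right psd_ptrace_right mult.assoc)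
next
  fix X :: "complex mat"
  have "mtrace dA (ptrace_right dA dB X) = mtrace (dA * dB) X"
    unfolding mtrace_def ptrace_right_def by (simp add: sum_lessThan_mult)
  then show "Re (mtrace dA (ptrace_right dA dB X)) \<le> Re (mtrace (dA * dB) X)" by simp
qed (simp add: ptrace_right_def)

lemma lift_first_ptrace_right:
  "lift_first (dA * dB) dA dC (ptrace_right dA dB) X = ptrace_mid dA dB dC X"
proof (rule eq_matI)
  fix i j assume "i < dim_row (ptrace_mid dA dB dC X)" "j < dim_col (ptrace_mid dA dB dC X)"
  then have ij: "i < dA * dC" "j < dA * dC" by (auto simp: ptrace_mid_def)
  then have "i div dC < dA" "j div dC < dA" by (auto simp: less_mult_imp_div_less)
  moreover have "((k div dC) * dB + m) * dC + k mod dC = (k div dC) * (dB * dC) + m * dC + k mod dC"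
    for k m by (simp add: algebra_simps)
  ultimately show "lift_first (dA * dB) dA dC (ptrace_right dA dB) X $$ (i, j) = ptrace_mid dA dB dC X $$ (i, j)"
    using ij by (simp add: lift_first_def ptrace_mid_def ptrace_right_def mixed_radix_less)
qed (auto simp: lift_first_def ptrace_mid_def)

lemma ptrace_mid_mult:
  "ptrace_mid dA (dB * dC) dD Z = ptrace_mid dA dC dD (ptrace_mid dA dB (dC * dD) Z)"
proof (rule eq_matI)
  fix i j
  assume "i < dim_row (ptrace_mid dA dC dD (ptrace_mid dA dB (dC * dD) Z))"
    "j < dim_col (ptrace_mid dA dC dD (ptrace_mid dA dB (dC * dD) Z))"
  then have ij: "i < dA * dD" "j < dA * dD" by (auto simp: ptrace_mid_def)
  then have "0 < dD" by (cases dD) auto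
  have inner_less: "c * dD + k mod dD < dC * dD" if "c < dC" for c k
    using \<open>0 < dD\<close> that by (simp add: mixed_radix_less)
  have outer_less: "k div dD * (dC * dD) + (c * dD + k mod dD) < dA * (dC * dD)"
    if "k < dA * dD" "c < dC" for c k
    using that inner_less by (simp add: mixed_radix_less less_mult_imp_div_less)
  have "ptrace_mid dA dC dD (ptrace_mid dA dB (dC * dD) Z) $$ (i, j)
     = (\<Sum>c<dC. \<Sum>b<dB. Z $$ (i div dD * (dB * (dC * dD)) + b * (dC * dD) + (c * dD + i mod dD),
                              j div dD * (dB * (dC * dD)) + b * (dC * dD) + (c * dD + j mod dD)))"
    using ij by (simp add: ptrace_mid_def add.assoc outer_less inner_less mixed_radix_div_mod)
  also have "\<dots> = (\<Sum>b<dB. \<Sum>c<dC. Z $$ (i div dD * (dB * dC * dD) + (b * dC + c) * dD + i mod dD,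
                              j div dD * (dB * dC * dD) + (b * dC + c) * dD + j mod dD))"
    by (subst sum.swap) (simp add: algebra_simps)
  also have "\<dots> = ptrace_mid dA (dB * dC) dD Z $$ (i, j)"
    using ij by (simp add: ptrace_mid_def sum_lessThan_mult mult.assoc)
  finally show "ptrace_mid dA (dB * dC) dD Z $$ (i, j)
      = ptrace_mid dA dC dD (ptrace_mid dA dB (dC * dD) Z) $$ (i, j)" by simp
qed (auto simp: ptrace_mid_def)

lemma lift_last_comp:
  assumes "\<forall>Y \<in> carrier_mat dA dA. \<E> Y \<in> carrier_mat dB dB"
  shows "lift_last n dB dC \<F> (lift_last n dA dB \<E> X) = lift_last n dA dC (\<F> \<circ> \<E>) X"
proof (rule eq_matI)
  fix i j
  assume "i < dim_row (lift_last n dA dC (\<F> \<circ> \<E>) X)" "j < dim_col (lift_last n dA dC (\<F> \<circ> \<E>) X)"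
  then have ij: "i < n * dC" "j < n * dC" by (auto simp: lift_last_def)
  then have blocks: "i div dC < n" "j div dC < n" by (auto simp: less_mult_imp_div_less)
  let ?block = "mat dA dA (\<lambda>(a, a'). X $$ (i div dC * dA + a, j div dC * dA + a'))"
  have carrier: "\<E> ?block \<in> carrier_mat dB dB" using assms by simp
  have "mat dB dB (\<lambda>(b, b'). lift_last n dA dB \<E> X $$ (i div dC * dB + b, j div dC * dB + b'))
      = \<E> ?block"
    by (rule eq_matI) (use carrier blocks in \<open>auto simp: lift_last_def mixed_radix_less\<close>)
  then show "lift_last n dB dC \<F> (lift_last n dA dB \<E> X) $$ (i, j)
      = lift_last n dA dC (\<F> \<circ> \<E>) X $$ (i, j)"
    using ij by (simp add: lift_last_def)
qed (auto simp: lift_last_def)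

lemma channel_comp:
  assumes "channel dA dB \<E>" "channel dB dC \<F>"
  shows "channel dA dC (\<F> \<circ> \<E>)"
proof -
  have carrier: "\<forall>Y \<in> carrier_mat dA dA. \<E> Y \<in> carrier_mat dB dB"
    using assms(1) by (simp add: channel_def cp_map_def)
  have "psd (n * dC) (lift_last n dA dC (\<F> \<circ> \<E>) X)" if "psd (n * dA) X" for n X
    using assms that unfolding lift_last_comp[OF carrier, symmetric] by (simp add: channel_def cp_map_def)
  then show ?thesis
    using assms carrier unfolding channel_def cp_map_def by auto
qed

lemma qsos_on_starE_star:
  assumes "0 < dA" "0 < dB" "0 < dC" "density dA \<rho>" "channel dA dB \<E>" "channel dB dC \<F>"
  shows "qsos_on star starE (dA * dB) dC (starE dA dB dC \<F> (star dA dB \<E> \<rho>))"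
proof -
  have "qsos star starE ([dA] @ [dB]) (star dA dB \<E> \<rho>)"
    using qsos_star[OF assms(1,2,4,5)] by simp
  from qsos_iter[OF this assms(3)]
  have "qsos star starE ([dA, dB] @ [dC]) (starE dA dB dC \<F> (star dA dB \<E> \<rho>))"
    using assms(6) by simp
  then show ?thesis
    unfolding qsos_on_def by (intro exI[of _ "[dA, dB]"] exI[of _ "[dC]"]) simp
qed

theorem proposition7:
  fixes star :: star_fun and starE :: starE_fun
    and \<E> \<F> \<G> :: "complex mat \<Rightarrow> complex mat" and \<rho> :: "complex mat"
    and dA dB dC dD :: nat
  assumes "state_over_time star" and "axiom_E star starE" and "axiom_P star starE"
    and "0 < dA" and "0 < dB" and "0 < dC" and "0 < dD"
    and "channel dA dB \<E>" and "channel dB dC \<F>" and "channel dC dD \<G>"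
    and "density dA \<rho>"
  shows "ptrace_mid dA (dB * dC) dD
           (starE (dA * dB) dC dD \<G> (starE dA dB dC \<F> (star dA dB \<E> \<rho>)))
         = star dA dD (\<G> \<circ> \<F> \<circ> \<E>) \<rho>"
proof -
  let ?X = "starE dA dB dC \<F> (star dA dB \<E> \<rho>)"
  have P_inner: "ptrace_mid dA dB dC ?X = star dA dC (\<F> \<circ> \<E>) \<rho>"
    using assms(3-6,8,9,11) unfolding axiom_P_def by blast
  have P_outer: "ptrace_mid dA dC dD (starE dA dC dD \<G> (star dA dC (\<F> \<circ> \<E>) \<rho>))
      = star dA dD (\<G> \<circ> (\<F> \<circ> \<E>)) \<rho>"
    using assms(3,4,6,7,10,11) channel_comp[OF assms(8,9)] unfolding axiom_P_def by blast
  have "lift_first (dA * dB) dA (dC * dD) (ptrace_right dA dB) (starE (dA * dB) dC dD \<G> ?X)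
      = starE dA dC dD \<G> (lift_first (dA * dB) dA dC (ptrace_right dA dB) ?X)"
    using assms(2,4-7,10) qsos_on_starE_star[OF assms(4-6,11,8,9)] cptni_ptrace_right
    unfolding axiom_E_def by simp
  then have E_trace_B: "ptrace_mid dA dB (dC * dD) (starE (dA * dB) dC dD \<G> ?X)
      = starE dA dC dD \<G> (star dA dC (\<F> \<circ> \<E>) \<rho>)"
    by (simp only: lift_first_ptrace_right P_inner)
  have "ptrace_mid dA (dB * dC) dD (starE (dA * dB) dC dD \<G> ?X)
      = ptrace_mid dA dC dD (ptrace_mid dA dB (dC * dD) (starE (dA * dB) dC dD \<G> ?X))"
    by (rule ptrace_mid_mult)
  also have "\<dots> = star dA dD (\<G> \<circ> \<F> \<circ> \<E>) \<rho>"
    by (simp only: E_trace_B P_outer o_assoc)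
  finally show ?thesis .
qed

end
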